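(* Let $K\ge1$, $T\ge1$ and $\ell_1,\dots,\ell_T\in[0,1]^K$. The regret of AdaHedge satisfies $\mathcal{R}^{\mathrm{ah}}_T=M^{\mathrm{ah}}_T-L^*_T+\Delta^{\mathrm{ah}}_T\le2\Delta^{\mathrm{ah}}_T$.
   Context: Hedge setting: $K$ experts; in round $t$ the learner chooses a probability vector $w_t$, then $\ell_t$ is revealed and the learner suffers $h_t=\sum_kw_{t,k}\ell_{t,k}$. Write $L_{t,k}=\sum_{s=1}^t\ell_{s,k}$ ($L_{0,k}=0$), $L^*_t=\min_kL_{t,k}$, $H_T=\sum_{t\le T}h_t$, regret $\mathcal{R}_T=H_T-L^*_T$. Exponential weights with learning rate $\eta\in(0,\infty]$ at time $t$: $w_{t,k}=e^{-\eta L_{t-1,k}}/\sum_je^{-\eta L_{t-1,j}}$ if $\eta<\infty$; for $\eta=\infty$, $w_t$ uniform on $\{k:L_{t-1,k}=L^*_{t-1}\}$. With learning rate $\eta_t$ in round $t$: mix loss $m_t=-\frac1{\eta_t}\ln\sum_kw_{t,k}e^{-\eta_t\ell_{t,k}}$ if $\eta_t<\infty$, $m_t=L^*_t-L^*_{t-1}$ if $\eta_t=\infty$; mixability gap $\delta_t=h_t-m_t$; $M_T=\sum_{t\le T}m_t$. AdaHedge: $\Delta^{\mathrm{ah}}_0=0$; in round $t$, $\eta^{\mathrm{ah}}_t=\ln K/\Delta^{\mathrm{ah}}_{t-1}$ ($=\infty$ if $\Delta^{\mathrm{ah}}_{t-1}=0$), weights are exponential weights with learning rate $\eta^{\mathrm{ah}}_t$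 from $L_{t-1}$, and $\Delta^{\mathrm{ah}}_t=\Delta^{\mathrm{ah}}_{t-1}+\delta^{\mathrm{ah}}_t$. Superscript ah denotes quantities for AdaHedge. *)

theory Defs
  imports Complex_Main "HOL-Library.Extended_Real"
begin

text \<open>Experts are indexed by k < K, rounds by t = 1,2,...; the loss of expert k in
round t is l t k. Learning rates live in ereal (value infinity allowed).\<close>

definition cumL :: "(nat \<Rightarrow> nat \<Rightarrow> real) \<Rightarrow> nat \<Rightarrow> nat \<Rightarrow> real" where
  "cumL l t k = (\<Sum>s\<in>{1..t}. l s k)"

definition Lstar :: "nat \<Rightarrow> (nat \<Rightarrow> nat \<Rightarrow> real) \<Rightarrow> nat \<Rightarrow> real" where
  "Lstar K l t = Min ((\<lambda>k. cumL l t k) ` {..<K})"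

definition ew_weight :: "nat \<Rightarrow> (nat \<Rightarrow> nat \<Rightarrow> real) \<Rightarrow> ereal \<Rightarrow> nat \<Rightarrow> nat \<Rightarrow> real" where
  "ew_weight K l eta t k =
     (if k < K then
        (if eta = \<infinity> then
           (let S = {j\<in>{..<K}. cumL l (t - 1) j = Lstar K l (t - 1)} in
              if k \<in> S then 1 / real (card S) else 0)
         else exp (- real_of_ereal eta * cumL l (t - 1) k) /
              (\<Sum>j<K. exp (- real_of_ereal eta * cumL l (t - 1) j)))
      else 0)"

definition hedge_loss :: "nat \<Rightarrow> (nat \<Rightarrow> nat \<Rightarrow> real) \<Rightarrow> ereal \<Rightarrow> nat \<Rightarrow> real" where
  "hedge_loss K l eta t = (\<Sum>k<K. ew_weight K l eta t k * l t k)"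

definition mix_loss :: "nat \<Rightarrow> (nat \<Rightarrow> nat \<Rightarrow> real) \<Rightarrow> ereal \<Rightarrow> nat \<Rightarrow> real" where
  "mix_loss K l eta t =
     (if eta = \<infinity> then Lstar K l t - Lstar K l (t - 1)
      else - (1 / real_of_ereal eta) *
             ln (\<Sum>k<K. ew_weight K l eta t k * exp (- real_of_ereal eta * l t k)))"

definition mix_gap :: "nat \<Rightarrow> (nat \<Rightarrow> nat \<Rightarrow> real) \<Rightarrow> ereal \<Rightarrow> nat \<Rightarrow> real" where
  "mix_gap K l eta t = hedge_loss K l eta t - mix_loss K l eta t"

definition ah_rate :: "nat \<Rightarrow> real \<Rightarrow> ereal" where
  "ah_rate K D = (if D = 0 then \<infinity> else ereal (ln (real K) / D))"

fun ah_Delta :: "nat \<Rightarrow> (nat \<Rightarrow> nat \<Rightarrow> real) \<Rightarrow> nat \<Rightarrow> real" where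
  "ah_Delta K l 0 = 0"
| "ah_Delta K l (Suc t) = ah_Delta K l t + mix_gap K l (ah_rate K (ah_Delta K l t)) (Suc t)"

definition ah_eta :: "nat \<Rightarrow> (nat \<Rightarrow> nat \<Rightarrow> real) \<Rightarrow> nat \<Rightarrow> ereal" where
  "ah_eta K l t = ah_rate K (ah_Delta K l (t - 1))"

definition ah_H :: "nat \<Rightarrow> (nat \<Rightarrow> nat \<Rightarrow> real) \<Rightarrow> nat \<Rightarrow> real" where
  "ah_H K l T = (\<Sum>t\<in>{1..T}. hedge_loss K l (ah_eta K l t) t)"

definition ah_M :: "nat \<Rightarrow> (nat \<Rightarrow> nat \<Rightarrow> real) \<Rightarrow> nat \<Rightarrow> real" where
  "ah_M K l T = (\<Sum>t\<in>{1..T}. mix_loss K l (ah_eta K l t) t)"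

definition ah_regret :: "nat \<Rightarrow> (nat \<Rightarrow> nat \<Rightarrow> real) \<Rightarrow> nat \<Rightarrow> real" where
  "ah_regret K l T = ah_H K l T - Lstar K l T"

end

theory Submission
  imports Defs "HOL-Analysis.Convex"
begin

text \<open>
  The mix loss telescopes: with the potential
  \<open>\<Phi>\<^sub>\<eta>(t) = -(1/\<eta>) ln ((1/K) \<Sum>\<^sub>k exp (-\<eta> L\<^sub>t\<^sub>,\<^sub>k))\<close> and \<open>\<Phi>\<^sub>\<infinity>(t) = L*\<^sub>t\<close>,
  one has \<open>m\<^sub>t = \<Phi>\<^sub>\<eta>(t) - \<Phi>\<^sub>\<eta>(t-1)\<close> for the rate \<open>\<eta>\<close> used in round \<open>t\<close>.
  The potential is nonincreasing in \<open>\<eta>\<close> (power-mean inequality) and satisfies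
  \<open>L*\<^sub>t \<le> \<Phi>\<^sub>\<eta>(t) \<le> L*\<^sub>t + ln K / \<eta>\<close>. Mixability gaps are nonnegative (Jensen), so the
  AdaHedge rates \<open>ln K / \<Delta>\<^sub>t\<^sub>-\<^sub>1\<close> decrease, and the telescoping sum gives
  \<open>M\<^sub>T \<le> \<Phi>\<^bsub>ln K / \<Delta>\<^sub>T\<^esub>(T) \<le> L*\<^sub>T + \<Delta>\<^sub>T\<close>; finally \<open>H\<^sub>T = M\<^sub>T + \<Delta>\<^sub>T\<close> by definition of \<open>\<Delta>\<close>.
\<close>

lemma cumL_0 [simp]: "cumL l 0 k = 0"
  by (simp add: cumL_def)

lemma cumL_Suc [simp]: "cumL l (Suc t) k = cumL l t k + l (Suc t) k"
  by (simp add: cumL_def add.commute)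

lemma Lstar_le_cumL: "k < K \<Longrightarrow> Lstar K l t \<le> cumL l t k"
  unfolding Lstar_def by (rule Min_le) auto

lemma Lstar_attained:
  assumes "K \<ge> 1"
  obtains k where "k < K" "cumL l t k = Lstar K l t"
proof -
  have "Lstar K l t \<in> (\<lambda>k. cumL l t k) ` {..<K}"
    unfolding Lstar_def using assms by (intro Min_in) (auto simp: lessThan_empty_iff)
  then obtain k where "k < K" "Lstar K l t = cumL l t k"
    by auto
  then show ?thesis
    using that by simp
qed

lemma Lstar_0: "K \<ge> 1 \<Longrightarrow> Lstar K l 0 = 0"
  by (rule Lstar_attained[of K l 0]) simp_all

lemma ew_weight_nonneg: "0 \<le> ew_weight K l eta t k"
  by (auto simp: ew_weight_def Let_def intro!: divide_nonneg_nonneg sum_nonneg)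

definition ew_partition :: "nat \<Rightarrow> (nat \<Rightarrow> nat \<Rightarrow> real) \<Rightarrow> real \<Rightarrow> nat \<Rightarrow> real" where
  "ew_partition K l e t = (\<Sum>k<K. exp (- e * cumL l t k))"

lemma ew_partition_pos: "K \<ge> 1 \<Longrightarrow> 0 < ew_partition K l e t"
  unfolding ew_partition_def by (intro sum_pos) (auto simp: lessThan_empty_iff)

lemma ew_weight_sum:
  assumes "K \<ge> 1"
  shows "(\<Sum>k<K. ew_weight K l eta t k) = 1"
proof (cases "eta = \<infinity>")
  case True
  define S where "S = {j\<in>{..<K}. cumL l (t - 1) j = Lstar K l (t - 1)}"
  obtain j where "j < K" "cumL l (t - 1) j = Lstar K l (t - 1)"
    using Lstar_attained[OF assms] .
  then have "S \<noteq> {}"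
    by (auto simp: S_def)
  moreover have "finite S" "S \<subseteq> {..<K}" by (auto simp: S_def)
  ultimately have "(\<Sum>k<K. if k \<in> S then 1 / real (card S) else 0) = 1"
    by (simp add: sum.If_cases Int_absorb1)
  moreover have "ew_weight K l eta t k = (if k \<in> S then 1 / real (card S) else 0)" if "k < K" for k
    using True that by (simp add: ew_weight_def S_def Let_def)
  ultimately show ?thesis
    by simp
next
  case False
  then show ?thesis
    using ew_partition_pos[OF assms, of l "real_of_ereal eta" "t - 1"]
    by (simp add: ew_weight_def ew_partition_def sum_divide_distrib[symmetric])
qed

lemma ew_weight_infinite_support:
  "ew_weight K l \<infinity> t k \<noteq> 0 \<Longrightarrow> cumL l (t - 1) k = Lstar K l (t - 1)"
  by (auto simp: ew_weight_def Let_def split: if_splits)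

lemma mix_le_mean:
  fixes w x :: "'a \<Rightarrow> real"
  assumes "finite A" "A \<noteq> {}" "sum w A = 1" "\<And>k. k \<in> A \<Longrightarrow> 0 \<le> w k" "0 < e"
  shows "- (1 / e) * ln (\<Sum>k\<in>A. w k * exp (- e * x k)) \<le> (\<Sum>k\<in>A. w k * x k)"
proof -
  have "exp (\<Sum>k\<in>A. w k *\<^sub>R (- e * x k)) \<le> (\<Sum>k\<in>A. w k * exp (- e * x k))"
    using assms by (intro convex_on_sum[OF _ _ exp_convex]) auto
  then have "exp (- e * (\<Sum>k\<in>A. w k * x k)) \<le> (\<Sum>k\<in>A. w k * exp (- e * x k))"
    by (simp add: sum_distrib_left algebra_simps)
  then have "- e * (\<Sum>k\<in>A. w k * x k) \<le> ln (\<Sum>k\<in>A. w k * exp (- e * x k))"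
    by (subst ln_ge_iff) (auto intro: less_le_trans[OF exp_gt_zero])
  then show ?thesis
    using \<open>0 < e\<close> by (simp add: field_simps)
qed

lemma mix_gap_finite_nonneg:
  assumes "K \<ge> 1" "0 < e"
  shows "0 \<le> mix_gap K l (ereal e) t"
  using mix_le_mean[of "{..<K}" "ew_weight K l (ereal e) t" e "l t"] assms
  by (simp add: mix_gap_def hedge_loss_def mix_loss_def ew_weight_sum ew_weight_nonneg lessThan_empty_iff)

lemma mix_gap_infinite_nonneg:
  assumes "K \<ge> 1" "t \<ge> 1"
  shows "0 \<le> mix_gap K l \<infinity> t"
proof -
  let ?w = "ew_weight K l \<infinity> t"
  have "?w k * (Lstar K l t - Lstar K l (t - 1)) \<le> ?w k * l t k" if "k < K" for k
  proof (cases "?w k = 0")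
    case False
    then have "cumL l (t - 1) k = Lstar K l (t - 1)"
      by (rule ew_weight_infinite_support)
    moreover have "Lstar K l t \<le> cumL l (t - 1) k + l t k"
      using Lstar_le_cumL[OF that, of l t] \<open>t \<ge> 1\<close> by (cases t) auto
    ultimately show ?thesis
      by (intro mult_left_mono) (auto simp: ew_weight_nonneg)
  qed simp
  then have "(\<Sum>k<K. ?w k) * (Lstar K l t - Lstar K l (t - 1)) \<le> hedge_loss K l \<infinity> t"
    unfolding hedge_loss_def sum_distrib_right by (rule sum_mono) simp
  then show ?thesis
    using ew_weight_sum[OF assms(1)] by (simp add: mix_gap_def mix_loss_def)
qed

lemma mix_gap_nonneg:
  assumes "K \<ge> 1" "t \<ge> 1" "0 < eta"
  shows "0 \<le> mix_gap K l eta t"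
  using assms mix_gap_finite_nonneg mix_gap_infinite_nonneg by (cases eta) auto

lemma mix_gap_single_expert: "t \<ge> 1 \<Longrightarrow> mix_gap 1 l \<infinity> t = 0"
  using ew_weight_sum[of 1 l \<infinity> t]
  by (cases t) (simp_all add: mix_gap_def hedge_loss_def mix_loss_def Lstar_def lessThan_Suc)

definition mix_potential :: "nat \<Rightarrow> (nat \<Rightarrow> nat \<Rightarrow> real) \<Rightarrow> ereal \<Rightarrow> nat \<Rightarrow> real" where
  "mix_potential K l eta t =
     (if eta = \<infinity> then Lstar K l t
      else - (1 / real_of_ereal eta) * ln (ew_partition K l (real_of_ereal eta) t / real K))"

lemma mix_potential_finite:
  "mix_potential K l (ereal e) t = - (1 / e) * ln (ew_partition K l e t / real K)"
  by (simp add: mix_potential_def)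

lemma mix_potential_0: "K \<ge> 1 \<Longrightarrow> mix_potential K l eta 0 = 0"
  by (simp add: mix_potential_def ew_partition_def Lstar_0)

lemma mix_loss_eq_potential_diff:
  assumes "K \<ge> 1" "t \<ge> 1"
  shows "mix_loss K l eta t = mix_potential K l eta t - mix_potential K l eta (t - 1)"
proof (cases "eta = \<infinity>")
  case False
  define e where "e = real_of_ereal eta"
  obtain s where t: "t = Suc s"
    using \<open>t \<ge> 1\<close> by (cases t) auto
  have "(\<Sum>k<K. ew_weight K l eta t k * exp (- e * l t k))
      = (\<Sum>k<K. exp (- e * cumL l t k) / ew_partition K l e s)"
    using False by (intro sum.cong) (auto simp: ew_weight_def e_def ew_partition_def t
        algebra_simps simp flip: exp_add)
  also have "\<dots> = ew_partition K l e t / ew_partition K l e s"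
    by (simp add: ew_partition_def sum_divide_distrib)
  finally have mix: "(\<Sum>k<K. ew_weight K l eta t k * exp (- e * l t k))
      = ew_partition K l e t / ew_partition K l e s" .
  have "0 < ew_partition K l e t" "0 < ew_partition K l e s" "0 < real K"
    using ew_partition_pos \<open>K \<ge> 1\<close> by auto
  then show ?thesis
    unfolding mix_loss_def mix_potential_def e_def[symmetric] mix
    using False by (simp add: t ln_div algebra_simps)
qed (simp add: mix_loss_def mix_potential_def)

lemma Lstar_le_mix_potential:
  assumes "K \<ge> 1" "0 < eta"
  shows "Lstar K l t \<le> mix_potential K l eta t"
proof (cases eta)
  case (real e)
  with assms have "0 < e" by simp
  have "ew_partition K l e t \<le> (\<Sum>k<K. exp (- e * Lstar K l t))"
    unfolding ew_partition_def using Lstar_le_cumL \<open>0 < e\<close> by (intro sum_mono) simp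
  then have "ew_partition K l e t / real K \<le> exp (- e * Lstar K l t)"
    using assms(1) by (simp add: field_simps)
  then have "ln (ew_partition K l e t / real K) \<le> ln (exp (- e * Lstar K l t))"
    using assms(1) ew_partition_pos[OF assms(1)] by (simp del: ln_exp)
  then have "ln (ew_partition K l e t / real K) \<le> - e * Lstar K l t"
    by simp
  then show ?thesis
    using real \<open>0 < e\<close> by (simp add: mix_potential_def field_simps)
qed (use assms in \<open>simp_all add: mix_potential_def\<close>)

lemma mix_potential_le_Lstar_add:
  assumes "K \<ge> 1" "0 < e"
  shows "mix_potential K l (ereal e) t \<le> Lstar K l t + ln (real K) / e"
proof -
  obtain j where "j < K" "cumL l t j = Lstar K l t"
    using Lstar_attained[OF assms(1)] .
  then have "exp (- e * Lstar K l t) \<le> ew_partition K l e t"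
    unfolding ew_partition_def by (metis finite_lessThan lessThan_iff exp_ge_zero member_le_sum)
  then have "- e * Lstar K l t - ln (real K) \<le> ln (ew_partition K l e t / real K)"
    using ew_partition_pos[OF assms(1)] assms(1) by (simp add: ln_div ln_ge_iff)
  then show ?thesis
    using \<open>0 < e\<close> by (simp add: mix_potential_def field_simps)
qed

text \<open>Convexity of \<open>x \<mapsto> x powr (e / e')\<close> compares the two normalised partition functions.\<close>

lemma mix_potential_finite_antimono:
  assumes "K \<ge> 1" "0 < e'" "e' \<le> e"
  shows "mix_potential K l (ereal e) t \<le> mix_potential K l (ereal e') t"
proof -
  define p where "p = e / e'"
  have "1 \<le> p"
    using assms by (simp add: p_def)
  define x where "x k = exp (- e' * cumL l t k)" for k
  have x_powr: "exp (- (e' * cumL l t k)) powr p = exp (- (e * cumL l t k))" for k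
    using assms by (simp add: powr_def p_def field_simps)
  have "(\<Sum>k<K. (1 / real K) *\<^sub>R x k) powr p \<le> (\<Sum>k<K. (1 / real K) * x k powr p)"
    using assms(1) by (intro convex_on_sum[OF _ _ powr_convex[OF \<open>1 \<le> p\<close>]])
      (auto simp: x_def lessThan_empty_iff)
  then have "(ew_partition K l e' t / real K) powr p \<le> ew_partition K l e t / real K"
    by (simp add: ew_partition_def x_powr x_def sum_divide_distrib flip: sum_distrib_left)
  moreover have "0 < ew_partition K l e' t" "0 < ew_partition K l e t"
    using ew_partition_pos[OF assms(1)] by auto
  ultimately have "ln ((ew_partition K l e' t / real K) powr p) \<le> ln (ew_partition K l e t / real K)"
    using assms(1) by (subst ln_le_cancel_iff) auto
  then have "p * ln (ew_partition K l e' t / real K) \<le> ln (ew_partition K l e t / real K)"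
    using \<open>0 < ew_partition K l e' t\<close> assms(1) by (simp add: ln_powr)
  then have "(1 / e) * (p * ln (ew_partition K l e' t / real K))
      \<le> (1 / e) * ln (ew_partition K l e t / real K)"
    using assms by (intro mult_left_mono) auto
  then show ?thesis
    using assms by (simp add: mix_potential_finite p_def field_simps)
qed

lemma mix_potential_antimono:
  assumes "K \<ge> 1" "0 < eta'" "eta' \<le> eta"
  shows "mix_potential K l eta t \<le> mix_potential K l eta' t"
proof (cases eta)
  case (real e)
  with assms obtain e' where "eta' = ereal e'" "0 < e'" "e' \<le> e"
    by (cases eta') auto
  then show ?thesis
    using real mix_potential_finite_antimono[OF assms(1)] by simp
qed (use assms Lstar_le_mix_potential in \<open>simp_all add: mix_potential_def\<close>)

lemma ah_rate_pos:
  assumes "0 \<le> D" "D = 0 \<or> 2 \<le> K"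
  shows "0 < ah_rate K D"
  using assms by (auto simp: ah_rate_def)

lemma ah_rate_antimono:
  assumes "K \<ge> 1" "0 \<le> D" "D \<le> D'"
  shows "ah_rate K D' \<le> ah_rate K D"
  using assms by (auto simp: ah_rate_def intro: divide_left_mono)

lemma mix_potential_ah_rate_le:
  assumes "K \<ge> 1" "0 \<le> D" "D = 0 \<or> 2 \<le> K"
  shows "mix_potential K l (ah_rate K D) t \<le> Lstar K l t + D"
proof (cases "D = 0")
  case False
  with assms have "0 < ln (real K) / D" "0 < ln (real K)"
    by auto
  then show ?thesis
    using False mix_potential_le_Lstar_add[OF assms(1) \<open>0 < ln (real K) / D\<close>]
    by (simp add: ah_rate_def)
qed (simp add: ah_rate_def mix_potential_def)

lemma ah_Delta_single_expert: "ah_Delta 1 l n = 0"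
proof (induction n)
  case (Suc n)
  then show ?case
    using mix_gap_single_expert[of "Suc n" l] by (simp add: ah_rate_def)
qed simp

text \<open>For \<open>K = 1\<close> a positive \<open>\<Delta>\<close> would give the degenerate rate \<open>ln 1 / \<Delta> = 0\<close>; this cannot happen.\<close>

lemma ah_Delta_zero_or_two_le: "K \<ge> 1 \<Longrightarrow> ah_Delta K l n = 0 \<or> 2 \<le> K"
  using ah_Delta_single_expert[of l n] by (cases "K = 1") auto

lemma ah_Delta_nonneg: "K \<ge> 1 \<Longrightarrow> 0 \<le> ah_Delta K l n"
proof (induction n)
  case (Suc n)
  then have "0 < ah_rate K (ah_Delta K l n)"
    by (intro ah_rate_pos ah_Delta_zero_or_two_le)
  with Suc show ?case
    using mix_gap_nonneg[of K "Suc n"] by simp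
qed simp

lemma ah_rate_ah_Delta_pos: "K \<ge> 1 \<Longrightarrow> 0 < ah_rate K (ah_Delta K l n)"
  by (intro ah_rate_pos ah_Delta_nonneg ah_Delta_zero_or_two_le)

lemma ah_Delta_mono: "K \<ge> 1 \<Longrightarrow> ah_Delta K l n \<le> ah_Delta K l (Suc n)"
  using mix_gap_nonneg[of K "Suc n" _ l] ah_rate_ah_Delta_pos by simp

lemma ah_M_le_mix_potential:
  assumes "K \<ge> 1"
  shows "ah_M K l n \<le> mix_potential K l (ah_rate K (ah_Delta K l n)) n"
proof (induction n)
  case 0
  then show ?case
    using assms by (simp add: ah_M_def mix_potential_0)
next
  case (Suc n)
  let ?eta = "\<lambda>n. ah_rate K (ah_Delta K l n)"
  have "ah_M K l (Suc n) = ah_M K l n + mix_loss K l (?eta n) (Suc n)"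
    by (simp add: ah_M_def ah_eta_def)
  also have "\<dots> \<le> mix_potential K l (?eta n) (Suc n)"
    using Suc.IH mix_loss_eq_potential_diff[OF assms, of "Suc n" l "?eta n"] by simp
  also have "\<dots> \<le> mix_potential K l (?eta (Suc n)) (Suc n)"
    using assms by (intro mix_potential_antimono ah_rate_ah_Delta_pos ah_rate_antimono ah_Delta_nonneg
        ah_Delta_mono)
  finally show ?case .
qed

lemma ah_H_eq: "ah_H K l n = ah_M K l n + ah_Delta K l n"
  by (induction n) (simp_all add: ah_H_def ah_M_def ah_eta_def mix_gap_def)

theorem lemma3:
  fixes K T :: nat and l :: "nat \<Rightarrow> nat \<Rightarrow> real"
  assumes "K \<ge> 1" and "T \<ge> 1"
    and "\<And>t k. t \<in> {1..T} \<Longrightarrow> k < K \<Longrightarrow> 0 \<le> l t k \<and> l t k \<le> 1"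
  shows "ah_regret K l T = ah_M K l T - Lstar K l T + ah_Delta K l T
         \<and> ah_regret K l T \<le> 2 * ah_Delta K l T"
proof -
  \<comment> \<open>The bound holds for arbitrary real losses.\<close>
  have "ah_M K l T \<le> Lstar K l T + ah_Delta K l T"
    using ah_M_le_mix_potential[OF assms(1)] mix_potential_ah_rate_le[OF assms(1)]
      ah_Delta_nonneg[OF assms(1)] ah_Delta_zero_or_two_le[OF assms(1)]
    by (meson order_trans)
  then show ?thesis
    using ah_H_eq[of K l T] by (simp add: ah_regret_def)
qed

end
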